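(* Let $\Phi_1,\Phi_2\in\mathrm{SL}(2,\mathbb C)$ be the monodromy matrices defined below. (a) $\Phi_1$ and $\Phi_2$ have the forms $$\Phi_1=\begin{pmatrix}r_1&p\\ -\bar p&r_2\end{pmatrix},\qquad \Phi_2=\begin{pmatrix}q&ir_3\\ ir_4&\bar q\end{pmatrix}$$ with $p,q\in\mathbb C$ and $r_1,r_2,r_3,r_4\in\mathbb R$. (b) Assume $p\neq0$, $q\neq0$, $r_1\neq r_2$ and $r_3\neq r_4$. Put $$h_1=\frac{2\,\Re(p)}{r_2-r_1},\qquad h_2=\frac{2\,\Im(q)}{r_4-r_3}.$$ - There exist real $\alpha,\beta$ with $\alpha^2-\beta^2=1$ such that, for $S=\begin{pmatrix}\alpha&\beta\\ \beta&\alpha\end{pmatrix}$, both matrices $S^{-1}\Phi_1S$ and $S^{-1}\Phi_2S$ lie in $\mathrm{SU}(2)$, if and only if $h_1=h_2$ and $|h_1|>1$. In that case $\alpha,\beta$ are determined by $\frac{\alpha^2+\beta^2}{2\alpha\beta}=h_1$. - There exist real $\alpha,\beta$ with $-2\alpha\beta=1$ such that, for $S=\begin{pmatrix}\alpha&\beta\\ \alpha&-\beta\end{pmatrix}$, both matrices $S^{-1}\Phi_1S$ and $S^{-1}\Phi_2S$ lie in $\mathrm{SU}(1,1)$, if and only if $h_1=h_2$ and $|h_1|<1$. In that case $\alpha,\beta$ are determined by $\frac{\alpha^2-\beta^2}{\alpha^2+\beta^2}=h_1$. In particular, the closing conditions along $\gamma_1,\gamma_2$ for $f_H$ or $f_S$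 reduce to the single condition $h_1=h_2\in\mathbb R\setminus\{\pm1\}$. Then $|h_1|>1$ gives a surface in $H^3$, and $|h_1|<1$ gives a surface in $S^3_1$.
   Context: Fix an integer $k\ge1$, a real number $\lambda>1$ and a real number $c\ne0$. Let $$\overline M=\Big\{(z,w)\in(\mathbb C\cup\{\infty\})^2 : w^{k+1}=z\Big(\frac{z-\lambda^{-1}}{\lambda-z}\Big)^k\Big\},$$ a compact Riemann surface of genus $k$. Let $M=\overline M\setminus\{(0,0),(\infty,\infty)\}$, with universal cover $\widetilde M$. Set $G=\lambda^{k/(k+1)}w$, $\Omega=c\,\frac{dz}{zw}$, $w_0=\lambda^{-k/(k+1)}$ and $\Lambda=e^{2\pi i/(k+1)}$. Let $\kappa_1(z,w)=(\bar z,\bar w)$, $\kappa_2(z,w)=\big(1/z,\ \lambda^{-2k/(k+1)}/w\big)$ and $\kappa_3(z,w)=(\bar z,\Lambda\bar w)$. Paths and loops in $M$: - $c_1$ goes from $(1,w_0)$ through $\{\Im z<0\}$, with embedded $z$-projection, to a point with real $z\in(0,\lambda^{-1})$. - $c_2$ goes from $(1,w_0)$ through $\{\Im z<0\}$, with embedded $z$-projection, to a point with real $z<0$. - $\gamma_1$ is the concatenation $c_1$, then $\kappa_3\circ c_1^{-1}$, then $\kappa_2\circ\kappa_1\circ\kappa_3\circ c_1$, then $\kappa_1\circ\kappa_2\circ c_1^{-1}$. It is a loop at $(1,w_0)$ whose $z$-projection winds once around $[\lambda^{-1},\lambda]$. - $\gamma_2$ is the concatenation $c_2$, then $\kappa_1\circ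 c_2^{-1}$. It is a loop at $(1,w_0)$ whose $z$-projection winds once around $0$. Let $F:\widetilde M\to\mathrm{SL}(2,\mathbb C)$ solve $$dF\,F^{-1}=\begin{pmatrix}G&-G^2\\ 1&-G\end{pmatrix}\Omega$$ with $F=\mathrm{id}$ at a lift of $(1,w_0)$. Let $\tau_j$ be the deck transformation of $\widetilde M$ corresponding to $\gamma_j$. With $\begin{pmatrix}A_j&B_j\\ C_j&D_j\end{pmatrix}$ the value of $F$ continued along $c_j$ to $c_j(1)$, define $\Phi_1,\Phi_2$ by $F\circ\tau_j=F\Phi_j$. Explicitly, $$\Phi_1=\begin{pmatrix}\bar A_1&-\bar C_1\\ -\bar B_1&\bar D_1\end{pmatrix}\begin{pmatrix}D_1&\Lambda C_1\\ \Lambda^{-1}B_1&A_1\end{pmatrix}\begin{pmatrix}\bar D_1&-\Lambda\bar B_1\\ -\Lambda^{-1}\bar C_1&\bar A_1\end{pmatrix}\begin{pmatrix}A_1&B_1\\ C_1&D_1\end{pmatrix},$$ $$\Phi_2=\begin{pmatrix}\bar D_2&-\bar B_2\\ -\bar C_2&\bar A_2\end{pmatrix}\begin{pmatrix}A_2&B_2\\ C_2&D_2\end{pmatrix}.$$ If the initial condition is replaced by $F=S$ at the base point, the monodromies along $\gamma_j$ become $S^{-1}\Phi_jS$. Surfaces: $H^3=\{aa^*\}$ and $S^3_1=\{a e_3 a^*\}$ for $a\in\mathrm{SL}(2,\mathbb C)$, where $a^*=\bar a^{t}$ and $e_3=\mathrm{diag}(1,-1)$. Put $f_H=FF^*$ (a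 constant mean curvature $1$ immersion into $H^3$) and $f_S=Fe_3F^*$ (a constant mean curvature $1$ face into $S^3_1$). $\mathrm{SU}(1,1)=\{X\in\mathrm{SL}(2,\mathbb C): Xe_3X^*=e_3\}$. *)

theory Defs
  imports "HOL-Analysis.Analysis"
begin

definition mat2 :: "complex \<Rightarrow> complex \<Rightarrow> complex \<Rightarrow> complex \<Rightarrow> complex^2^2" where
  "mat2 a b c d = (\<chi> i j. if i = 1 then (if j = 1 then a else b) else (if j = 1 then c else d))"

definition cadj :: "complex^2^2 \<Rightarrow> complex^2^2" where
  "cadj X = (\<chi> i j. cnj (X $ j $ i))"

definition e3 :: "complex^2^2" where
  "e3 = mat2 1 0 0 (-1)"

definition SL2 :: "(complex^2^2) set" where
  "SL2 = {X. det X = 1}"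

definition SU2 :: "(complex^2^2) set" where
  "SU2 = {X. X \<in> SL2 \<and> X ** cadj X = mat 1}"

definition SU11 :: "(complex^2^2) set" where
  "SU11 = {X. X \<in> SL2 \<and> X ** e3 ** cadj X = e3}"

definition Lam :: "nat \<Rightarrow> complex" where
  "Lam k = cis (2 * pi / real (k + 1))"

text \<open>The monodromy matrices, as explicit functions of the value
  \<open>(A B; C D)\<close> of F continued along \<open>c_j\<close>.\<close>
definition Phi1 :: "nat \<Rightarrow> complex \<Rightarrow> complex \<Rightarrow> complex \<Rightarrow> complex \<Rightarrow> complex^2^2" where
  "Phi1 k A B C D =
     mat2 (cnj A) (- cnj C) (- cnj B) (cnj D)
     ** mat2 D (Lam k * C) (inverse (Lam k) * B) A
     ** mat2 (cnj D) (- Lam k * cnj B) (- inverse (Lam k) * cnj C) (cnj A)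
     ** mat2 A B C D"

definition Phi2 :: "complex \<Rightarrow> complex \<Rightarrow> complex \<Rightarrow> complex \<Rightarrow> complex^2^2" where
  "Phi2 A B C D = mat2 (cnj D) (- cnj B) (- cnj C) (cnj A) ** mat2 A B C D"

definition conjm :: "complex^2^2 \<Rightarrow> complex^2^2 \<Rightarrow> complex^2^2" where
  "conjm S X = matrix_inv S ** X ** S"

end

theory Submission
  imports Defs
begin

text \<open>
  Write \<open>U(E) = {X \<in> SL(2,C). X E X^* = E}\<close> for a Hermitian form \<open>E\<close>;
  then \<open>SU(2) = U(1)\<close> and \<open>SU(1,1) = U(e3)\<close>.  For \<open>det S = 1\<close> the conjugate \<open>S^-1 P S\<close>
  lies in \<open>U(E)\<close> iff \<open>P\<close> preserves the Hermitian form \<open>G = S E S^*\<close>, and for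
  \<open>det P = 1\<close> this is the linear condition \<open>P G = G (P^*)^-1\<close>.  For the two monodromies
  (whose shape (a) follows from \<open>e3 \<Phi>1\<close> being Hermitian and a direct computation of
  \<open>\<Phi>2\<close>) these linear conditions force \<open>G = (x y; y x)\<close> real with
  \<open>x (r2 - r1) = 2 y Re p\<close> and \<open>x (r4 - r3) = 2 y Im q\<close>, i.e. \<open>h1 = h2 = x/y\<close>.  Since
  \<open>x^2 - y^2 = det G = det E = \<plusminus>1\<close>, the sign of \<open>det E\<close> decides whether \<open>|h1| > 1\<close>
  or \<open>|h1| < 1\<close>.  Conversely, for the two explicit families of frames \<open>S\<close> the form
  \<open>S E S^*\<close> is computed, and hyperbolic functions (surjectivity of \<open>tanh\<close> onto \<open>(-1,1)\<close>)
  provide a frame realising any prescribed ratio.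
\<close>

lemma mat2_nth [simp]:
  "mat2 a b c d $ 1 $ 1 = a" "mat2 a b c d $ 1 $ 2 = b"
  "mat2 a b c d $ 2 $ 1 = c" "mat2 a b c d $ 2 $ 2 = d"
  by (simp_all add: mat2_def)

lemma mat2_eta: "X = mat2 (X$1$1) (X$1$2) (X$2$1) (X$2$2)"
  by (simp add: vec_eq_iff forall_2)

lemma mat2_eq_iff:
  "mat2 a b c d = mat2 a' b' c' d' \<longleftrightarrow> a = a' \<and> b = b' \<and> c = c' \<and> d = d'"
  by (auto simp add: vec_eq_iff forall_2)

lemma mat2_mult:
  "mat2 a b c d ** mat2 e f g h = mat2 (a*e+b*g) (a*f+b*h) (c*e+d*g) (c*f+d*h)"
  by (simp add: vec_eq_iff forall_2 matrix_matrix_mult_def sum_2)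

lemma mat2_cadj: "cadj (mat2 a b c d) = mat2 (cnj a) (cnj c) (cnj b) (cnj d)"
  by (simp add: vec_eq_iff forall_2 cadj_def)

lemma mat2_det: "det (mat2 a b c d) = a*d - b*c"
  by (simp add: det_2)

lemma mat2_one: "mat 1 = mat2 1 0 0 1"
  by (simp add: vec_eq_iff forall_2 mat_def)

text \<open>Real symmetric matrices with equal diagonal entries: the shape of every
  form invariant under both monodromies, and also the frames used for \<open>SU(2)\<close>.\<close>
abbreviation sym2 :: "real \<Rightarrow> real \<Rightarrow> complex^2^2" where
  "sym2 x y \<equiv> mat2 (of_real x) (of_real y) (of_real y) (of_real x)"

abbreviation lorentz_frame :: "real \<Rightarrow> real \<Rightarrow> complex^2^2" where
  "lorentz_frame a b \<equiv> mat2 (of_real a) (of_real b) (of_real a) (- of_real b)"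

lemma sym2_eq_iff: "sym2 x y = sym2 x' y' \<longleftrightarrow> x = x' \<and> y = y'"
  by (auto simp add: mat2_eq_iff)

lemma cadj_mult: "cadj (A ** B) = cadj B ** cadj (A::complex^2^2)"
  by (simp add: cadj_def vec_eq_iff matrix_matrix_mult_def cnj_sum mult.commute)

lemma cadj_cadj [simp]: "cadj (cadj (A::complex^2^2)) = A"
  by (simp add: cadj_def vec_eq_iff)

lemma cadj_one [simp]: "cadj (mat 1 :: complex^2^2) = mat 1"
  by (simp add: mat2_one mat2_cadj)

lemma det_cadj: "det (cadj (A::complex^2^2)) = cnj (det A)"
  by (subst (1 2) mat2_eta[of A]) (simp add: mat2_cadj mat2_det)

lemma hermitian_mat2:
  assumes "cadj G = (G::complex^2^2)"
  shows "G = mat2 (of_real (Re (G$1$1))) (G$1$2) (cnj (G$1$2)) (of_real (Re (G$2$2)))"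
proof -
  have "cadj (mat2 (G$1$1) (G$1$2) (G$2$1) (G$2$2)) = mat2 (G$1$1) (G$1$2) (G$2$1) (G$2$2)"
    using assms mat2_eta[of G] by simp
  then have "cnj (G$1$1) = G$1$1" "G$2$1 = cnj (G$1$2)" "cnj (G$2$2) = G$2$2"
    by (auto simp add: mat2_cadj mat2_eq_iff)
  then show ?thesis
    by (subst mat2_eta) (simp add: mat2_eq_iff complex_eq_iff)
qed

section \<open>Isometry groups of Hermitian forms\<close>

definition isom :: "complex^2^2 \<Rightarrow> (complex^2^2) set" where
  "isom E = {X \<in> SL2. X ** E ** cadj X = E}"

lemma SU2_isom: "SU2 = isom (mat 1)"
  by (simp add: SU2_def isom_def)

lemma SU11_isom: "SU11 = isom e3"
  by (simp add: SU11_def isom_def)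

lemma matrix_inv_props:
  assumes "det (S::complex^2^2) \<noteq> 0"
  shows "S ** matrix_inv S = mat 1" "matrix_inv S ** S = mat 1"
proof -
  have "\<exists>A'. S ** A' = mat 1 \<and> A' ** S = mat 1"
    using assms invertible_det_nz unfolding invertible_def by blast
  from someI_ex[OF this] show "S ** matrix_inv S = mat 1" "matrix_inv S ** S = mat 1"
    unfolding matrix_inv_def by auto
qed

lemma det_conjm:
  assumes "det (S::complex^2^2) \<noteq> 0"
  shows "det (conjm S P) = det P"
proof -
  have "det (matrix_inv S) * det S = 1"
    using matrix_inv_props(2)[OF assms] det_mul by (metis det_I)
  then show ?thesis
    unfolding conjm_def det_mul by (metis mult.commute mult.left_commute mult_1_right)
qed

lemma conjm_preserves_iff:
  assumes "det (S::complex^2^2) \<noteq> 0"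
  shows "conjm S P ** E ** cadj (conjm S P) = E \<longleftrightarrow>
         P ** (S ** E ** cadj S) ** cadj P = S ** E ** cadj S"
proof -
  define T where "T = matrix_inv S"
  note inv = matrix_inv_props[OF assms, folded T_def]
  have inv_cadj: "cadj T ** cadj S = mat 1" "cadj S ** cadj T = mat 1"
    by (metis cadj_mult cadj_one inv)+
  have to_E: "T ** (S ** X ** cadj S) ** cadj T = X" for X
  proof -
    have "T ** (S ** X ** cadj S) ** cadj T = (T ** S) ** X ** (cadj S ** cadj T)"
      by (simp add: matrix_mul_assoc)
    then show ?thesis using inv inv_cadj by simp
  qed
  have to_G: "S ** (T ** X ** cadj T) ** cadj S = X" for X
  proof -
    have "S ** (T ** X ** cadj T) ** cadj S = (S ** T) ** X ** (cadj T ** cadj S)"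
      by (simp add: matrix_mul_assoc)
    then show ?thesis using inv inv_cadj by simp
  qed
  have "conjm S P ** E ** cadj (conjm S P) = T ** (P ** (S ** E ** cadj S) ** cadj P) ** cadj T"
    by (simp add: conjm_def cadj_mult T_def matrix_mul_assoc)
  then show ?thesis
    using to_E[of E] to_G[of "P ** (S ** E ** cadj S) ** cadj P"] by metis
qed

text \<open>For a unimodular \<open>P\<close>, preserving \<open>G\<close> is a linear condition: \<open>P G = G (P^*)^-1\<close>,
  where \<open>(P^*)^-1\<close> is written out explicitly.\<close>
lemma preserves_iff_intertwines:
  assumes "a * d - b * c = 1"
  shows "mat2 a b c d ** G ** cadj (mat2 a b c d) = G \<longleftrightarrow>
         mat2 a b c d ** G = G ** mat2 (cnj d) (- cnj c) (- cnj b) (cnj a)"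
proof -
  define P where "P = mat2 a b c d"
  define Q where "Q = mat2 (cnj d) (- cnj c) (- cnj b) (cnj a)"
  have "cnj a * cnj d - cnj b * cnj c = 1"
    using arg_cong[OF assms, of cnj] by simp
  then have inv: "cadj P ** Q = mat 1" "Q ** cadj P = mat 1"
    unfolding P_def Q_def mat2_cadj mat2_mult mat2_one mat2_eq_iff
    by (simp_all add: algebra_simps)
  show ?thesis
    unfolding P_def[symmetric] Q_def[symmetric]
  proof
    assume "P ** G ** cadj P = G"
    then have "P ** G = P ** G ** (cadj P ** Q)" using inv by simp
    with \<open>P ** G ** cadj P = G\<close> show "P ** G = G ** Q" by (simp add: matrix_mul_assoc)
  next
    assume "P ** G = G ** Q"
    then have "P ** G ** cadj P = G ** (Q ** cadj P)" by (simp add: matrix_mul_assoc)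
    then show "P ** G ** cadj P = G" using inv by simp
  qed
qed

section \<open>The monodromy matrices\<close>

lemma e3_sq: "e3 ** e3 = mat 1"
  by (simp add: e3_def mat2_mult mat2_one)

lemma e3_cadj: "cadj e3 = e3"
  by (simp add: e3_def mat2_cadj)

lemma det_e3: "det e3 = -1"
  by (simp add: e3_def mat2_det)

lemma Lam_cnj: "cnj (Lam k) = inverse (Lam k)" "Lam k \<noteq> 0"
  by (simp_all add: Lam_def cis_cnj)

text \<open>\<open>\<Phi>1 = (e3 M^* e3) X (e3 X^* e3) M\<close> with \<open>M\<close> the value of \<open>F\<close> at \<open>c1(1)\<close> and
  \<open>X\<close> its image under the symmetry \<open>\<kappa>3\<close>; hence \<open>e3 \<Phi>1 = M^* (e3 X e3 X^* e3) M\<close>.\<close>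
lemma e3_Phi1_hermitian: "cadj (e3 ** Phi1 k A B C D) = e3 ** Phi1 k A B C D"
proof -
  define M where "M = mat2 A B C D"
  define X where "X = mat2 D (Lam k * C) (inverse (Lam k) * B) A"
  have "Phi1 k A B C D = (e3 ** cadj M ** e3) ** X ** (e3 ** cadj X ** e3) ** M"
    unfolding Phi1_def M_def X_def by (simp add: e3_def mat2_cadj mat2_mult Lam_cnj)
  then have "e3 ** Phi1 k A B C D = cadj M ** (e3 ** X ** e3 ** cadj X ** e3) ** M"
    by (simp add: matrix_mul_assoc e3_sq)
  then show ?thesis
    by (simp add: cadj_mult e3_cadj matrix_mul_assoc)
qed

lemma Phi1_shape: "\<exists>p r1 r2. Phi1 k A B C D = mat2 (of_real r1) p (- cnj p) (of_real r2)"
proof -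
  define P where "P = Phi1 k A B C D"
  have "cadj (e3 ** mat2 (P$1$1) (P$1$2) (P$2$1) (P$2$2)) = e3 ** mat2 (P$1$1) (P$1$2) (P$2$1) (P$2$2)"
    using e3_Phi1_hermitian mat2_eta[of P] unfolding P_def by metis
  then have "cnj (P$1$1) = P$1$1" "P$2$1 = - cnj (P$1$2)" "cnj (P$2$2) = P$2$2"
    by (auto simp add: e3_def mat2_mult mat2_cadj mat2_eq_iff)
  then have "P = mat2 (of_real (Re (P$1$1))) (P$1$2) (- cnj (P$1$2)) (of_real (Re (P$2$2)))"
    by (subst mat2_eta) (simp add: mat2_eq_iff complex_eq_iff)
  then show ?thesis unfolding P_def by blast
qed

lemma Phi2_shape: "\<exists>q r3 r4. Phi2 A B C D = mat2 q (\<i> * of_real r3) (\<i> * of_real r4) (cnj q)"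
proof -
  have "Phi2 A B C D = mat2 (cnj D * A - cnj B * C) (\<i> * of_real (- 2 * Im (cnj B * D)))
      (\<i> * of_real (2 * Im (cnj A * C))) (cnj (cnj D * A - cnj B * C))"
    unfolding Phi2_def by (simp add: mat2_mult mat2_eq_iff complex_eq_iff algebra_simps)
  then show ?thesis by blast
qed

lemma det_Phi1:
  assumes "A * D - B * C = 1"
  shows "det (Phi1 k A B C D) = 1"
proof -
  have "cnj A * cnj D - cnj B * cnj C = 1"
    using arg_cong[OF assms, of cnj] by simp
  then show ?thesis
    unfolding Phi1_def det_mul mat2_det using assms Lam_cnj(2) by (simp add: algebra_simps)
qed

lemma det_Phi2:
  assumes "A * D - B * C = 1"
  shows "det (Phi2 A B C D) = 1"
proof -
  have "cnj A * cnj D - cnj B * cnj C = 1"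
    using arg_cong[OF assms, of cnj] by simp
  then show ?thesis
    unfolding Phi2_def det_mul mat2_det using assms by (simp add: algebra_simps)
qed

section \<open>Forms invariant under both monodromies\<close>

lemma invariant_hermitian_forms:
  fixes r1 r2 r3 r4 x z :: real and p q g :: complex
  assumes "p \<noteq> 0" "r3 \<noteq> r4"
  shows "(mat2 (of_real r1) p (- cnj p) (of_real r2) ** mat2 (of_real x) g (cnj g) (of_real z)
            = mat2 (of_real x) g (cnj g) (of_real z) ** mat2 (of_real r2) p (- cnj p) (of_real r1) \<and>
          mat2 q (\<i> * of_real r3) (\<i> * of_real r4) (cnj q) ** mat2 (of_real x) g (cnj g) (of_real z)
            = mat2 (of_real x) g (cnj g) (of_real z) ** mat2 q (\<i> * of_real r4) (\<i> * of_real r3) (cnj q))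
     \<longleftrightarrow> (z = x \<and> Im g = 0 \<and> x * (r2 - r1) = 2 * Re g * Re p \<and> x * (r4 - r3) = 2 * Re g * Im q)"
proof -
  have "Re p \<noteq> 0 \<or> Im p \<noteq> 0" using assms(1) complex_eq_iff by auto
  then show ?thesis
    unfolding mat2_mult mat2_eq_iff complex_eq_iff
    using assms(2) by (auto simp add: algebra_simps)
qed

lemma det_sym2_congruence:
  assumes "det (S::complex^2^2) = 1" "S ** E ** cadj S = sym2 x y" "det E = of_real d"
  shows "x\<^sup>2 - y\<^sup>2 = d"
proof -
  have "of_real (x\<^sup>2 - y\<^sup>2) = det (S ** E ** cadj S)"
    using assms(2) by (simp add: mat2_det power2_eq_square)
  also have "\<dots> = of_real d"
    using assms(1,3) by (simp add: det_mul det_cadj)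
  finally show ?thesis by (simp only: of_real_eq_iff)
qed

lemma sym2_frame:
  "det (sym2 a b) = of_real (a\<^sup>2 - b\<^sup>2)"
  "sym2 a b ** mat 1 ** cadj (sym2 a b) = sym2 (a\<^sup>2 + b\<^sup>2) (2 * a * b)"
  by (simp_all add: mat2_det mat2_cadj mat2_mult power2_eq_square mat2_eq_iff)

lemma lorentz_frame:
  "det (lorentz_frame a b) = of_real (- 2 * a * b)"
  "lorentz_frame a b ** e3 ** cadj (lorentz_frame a b) = sym2 (a\<^sup>2 - b\<^sup>2) (a\<^sup>2 + b\<^sup>2)"
  by (simp_all add: mat2_det mat2_cadj mat2_mult power2_eq_square mat2_eq_iff e3_def)

lemma frames_in_SL2:
  "a\<^sup>2 - b\<^sup>2 = 1 \<Longrightarrow> sym2 a b \<in> SL2"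
  "- 2 * a * b = 1 \<Longrightarrow> lorentz_frame a b \<in> SL2"
  by (simp_all only: SL2_def mem_Collect_eq sym2_frame(1) lorentz_frame(1) of_real_1)

lemma relations_iff_ratios:
  fixes x y a b r1 r2 r3 r4 :: real
  assumes "x\<^sup>2 - y\<^sup>2 \<noteq> 0" "r1 \<noteq> r2" "r3 \<noteq> r4"
  shows "(x * (r2 - r1) = 2 * y * a \<and> x * (r4 - r3) = 2 * y * b) \<longleftrightarrow>
         (y \<noteq> 0 \<and> 2 * a / (r2 - r1) = x / y \<and> 2 * b / (r4 - r3) = x / y)"
proof (cases "y = 0")
  case True
  then show ?thesis using assms by auto
next
  case False
  then show ?thesis using assms(2,3) by (auto simp: field_simps)
qed

lemma abs_ratio_vs_one:
  fixes x y :: real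
  assumes "y \<noteq> 0"
  shows "\<bar>x / y\<bar> > 1 \<longleftrightarrow> x\<^sup>2 - y\<^sup>2 > 0" "\<bar>x / y\<bar> < 1 \<longleftrightarrow> x\<^sup>2 - y\<^sup>2 < 0"
proof -
  have "\<bar>x / y\<bar> = \<bar>x\<bar> / \<bar>y\<bar>" "\<bar>y\<bar> > 0" using assms by (simp_all add: abs_divide)
  then show "\<bar>x / y\<bar> > 1 \<longleftrightarrow> x\<^sup>2 - y\<^sup>2 > 0" "\<bar>x / y\<bar> < 1 \<longleftrightarrow> x\<^sup>2 - y\<^sup>2 < 0"
    by (simp_all add: less_divide_eq_1 divide_less_eq_1 abs_le_square_iff flip: not_le)
qed

lemma tanh_surjective:
  fixes y :: real
  assumes "\<bar>y\<bar> < 1"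
  shows "\<exists>\<phi>. tanh \<phi> = y"
proof -
  define u where "u = sqrt ((1 + y) / (1 - y))"
  have pos: "(1 + y) / (1 - y) > 0" "1 - y > 0" using assms by (auto simp: abs_less_iff)
  then have "u > 0" "u\<^sup>2 = (1 + y) / (1 - y)" unfolding u_def by simp_all
  then have "u\<^sup>2 - 1 = y * (u\<^sup>2 + 1)"
    using pos by (simp add: field_simps)
  moreover have "u\<^sup>2 + 1 > 0"
    by (simp add: add_nonneg_pos)
  ultimately have "tanh (ln u) = y"
    using \<open>u > 0\<close> by (simp add: tanh_ln_real)
  then show ?thesis by blast
qed

lemma boost_parameters:
  fixes h :: real
  assumes "\<bar>h\<bar> > 1"
  shows "\<exists>a b. a\<^sup>2 - b\<^sup>2 = 1 \<and> a * b \<noteq> 0 \<and> (a\<^sup>2 + b\<^sup>2) / (2 * a * b) = h"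
proof -
  have "\<bar>1 / h\<bar> < 1" using assms by (simp add: abs_divide)
  then obtain \<phi> where \<phi>: "tanh \<phi> = 1 / h" using tanh_surjective by blast
  define a where "a = cosh (\<phi> / 2)"
  define b where "b = sinh (\<phi> / 2)"
  have "\<phi> \<noteq> 0" using \<phi> assms by auto
  have sq: "a\<^sup>2 + b\<^sup>2 = cosh \<phi>" "2 * a * b = sinh \<phi>"
    using cosh_double[of "\<phi> / 2"] sinh_double[of "\<phi> / 2"] unfolding a_def b_def by simp_all
  have "a\<^sup>2 - b\<^sup>2 = 1" unfolding a_def b_def by (simp add: cosh_square_eq)
  moreover have "sinh \<phi> \<noteq> 0" using \<open>\<phi> \<noteq> 0\<close> by simp
  moreover have "cosh \<phi> / sinh \<phi> = h"
  proof -
    have "cosh \<phi> = h * sinh \<phi>"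
      using \<phi> assms by (auto simp: tanh_def field_simps)
    then show ?thesis using \<open>sinh \<phi> \<noteq> 0\<close> by simp
  qed
  ultimately show ?thesis using sq by (metis mult_eq_0_iff)
qed

lemma lorentz_parameters:
  fixes h :: real
  assumes "\<bar>h\<bar> < 1"
  shows "\<exists>a b. - 2 * a * b = 1 \<and> (a\<^sup>2 - b\<^sup>2) / (a\<^sup>2 + b\<^sup>2) = h"
proof -
  obtain \<phi> where \<phi>: "tanh \<phi> = h" using tanh_surjective assms by blast
  define a where "a = exp (\<phi> / 2) / sqrt 2"
  define b where "b = - exp (- \<phi> / 2) / sqrt 2"
  have sq: "a\<^sup>2 = exp \<phi> / 2" "b\<^sup>2 = exp (- \<phi>) / 2"
    unfolding a_def b_def by (simp_all add: power_divide flip: exp_double)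
  have "- 2 * a * b = 1"
    unfolding a_def b_def by (simp flip: exp_add)
  moreover have "a\<^sup>2 - b\<^sup>2 = sinh \<phi>" "a\<^sup>2 + b\<^sup>2 = cosh \<phi>"
    unfolding sq sinh_def cosh_def by simp_all
  ultimately show ?thesis using \<phi> unfolding tanh_def by metis
qed

section \<open>The closing conditions\<close>

locale monodromy_data =
  fixes P1 P2 :: "complex^2^2" and p q :: complex and r1 r2 r3 r4 h1 h2 :: real
  assumes P1_eq: "P1 = mat2 (of_real r1) p (- cnj p) (of_real r2)"
    and P2_eq: "P2 = mat2 q (\<i> * of_real r3) (\<i> * of_real r4) (cnj q)"
    and det_P1: "det P1 = 1" and det_P2: "det P2 = 1"
    and p_nonzero: "p \<noteq> 0" and r12: "r1 \<noteq> r2" and r34: "r3 \<noteq> r4"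
    and h1_eq: "h1 = 2 * Re p / (r2 - r1)" and h2_eq: "h2 = 2 * Im q / (r4 - r3)"
begin

lemma closes_iff_invariant_form:
  assumes S: "det S = 1" and E: "cadj E = E"
  shows "(conjm S P1 \<in> isom E \<and> conjm S P2 \<in> isom E) \<longleftrightarrow>
    (\<exists>x y. S ** E ** cadj S = sym2 x y \<and>
           x * (r2 - r1) = 2 * y * Re p \<and> x * (r4 - r3) = 2 * y * Im q)"
proof -
  define G where "G = S ** E ** cadj S"
  have "cadj G = G" unfolding G_def by (simp add: cadj_mult E matrix_mul_assoc)
  then obtain x z g where G: "G = mat2 (of_real x) g (cnj g) (of_real z)"
    using hermitian_mat2 by blast
  have dets: "of_real r1 * of_real r2 - p * - cnj p = 1"
      "q * cnj q - \<i> * of_real r3 * (\<i> * of_real r4) = 1"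
    using det_P1 det_P2 unfolding P1_eq P2_eq mat2_det by simp_all
  have "(conjm S P1 \<in> isom E \<and> conjm S P2 \<in> isom E) \<longleftrightarrow>
        (P1 ** G ** cadj P1 = G \<and> P2 ** G ** cadj P2 = G)"
    using S det_P1 det_P2
    by (simp add: isom_def SL2_def det_conjm conjm_preserves_iff G_def)
  also have "\<dots> \<longleftrightarrow>
      (z = x \<and> Im g = 0 \<and> x * (r2 - r1) = 2 * Re g * Re p \<and> x * (r4 - r3) = 2 * Re g * Im q)"
    using invariant_hermitian_forms[OF p_nonzero r34]
    unfolding P1_eq P2_eq preserves_iff_intertwines[OF dets(1)] preserves_iff_intertwines[OF dets(2)]
    by (simp add: G)
  also have "\<dots> \<longleftrightarrow> (\<exists>x y. G = sym2 x y \<and>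
      x * (r2 - r1) = 2 * y * Re p \<and> x * (r4 - r3) = 2 * y * Im q)"
    unfolding G by (auto simp: mat2_eq_iff complex_eq_iff)
  finally show ?thesis unfolding G_def .
qed

lemma closes_iff_ratios:
  assumes S: "det S = 1" and E: "cadj E = E" "det E = of_real d" "d \<noteq> 0"
  shows "(conjm S P1 \<in> isom E \<and> conjm S P2 \<in> isom E) \<longleftrightarrow>
    (\<exists>x y. S ** E ** cadj S = sym2 x y \<and> y \<noteq> 0 \<and> h1 = x / y \<and> h2 = x / y)"
  using det_sym2_congruence[OF S _ E(2)] relations_iff_ratios[OF _ r12 r34] E(3)
  unfolding closes_iff_invariant_form[OF S E(1)] h1_eq h2_eq by metis

text \<open>Closing in \<open>SU(2)\<close> by any unimodular \<open>S\<close> forces \<open>h1 = h2\<close> and \<open>|h1| > 1\<close>: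
  the invariant form \<open>sym2 x y\<close> has determinant \<open>x^2 - y^2 = 1\<close>.\<close>
lemma SU2_closing_forces:
  assumes "S \<in> SL2" "conjm S P1 \<in> SU2" "conjm S P2 \<in> SU2"
  shows "h1 = h2 \<and> \<bar>h1\<bar> > 1"
proof -
  have S: "det S = 1" and E: "det (mat 1 :: complex^2^2) = of_real 1" "(1::real) \<noteq> 0"
    using assms(1) by (simp_all add: SL2_def)
  obtain x y where xy: "S ** mat 1 ** cadj S = sym2 x y" "y \<noteq> 0" "h1 = x / y" "h2 = x / y"
    using assms(2,3) closes_iff_ratios[OF S cadj_one E] unfolding SU2_isom by blast
  have "x\<^sup>2 - y\<^sup>2 = 1" using det_sym2_congruence[OF S xy(1) E(1)] .
  then show ?thesis using xy abs_ratio_vs_one(1)[of y x] by simp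
qed

text \<open>Closing in \<open>SU(1,1)\<close> forces \<open>h1 = h2\<close> and \<open>|h1| < 1\<close>, since now \<open>x^2 - y^2 = -1\<close>.\<close>
lemma SU11_closing_forces:
  assumes "S \<in> SL2" "conjm S P1 \<in> SU11" "conjm S P2 \<in> SU11"
  shows "h1 = h2 \<and> \<bar>h1\<bar> < 1"
proof -
  have S: "det S = 1" and E: "det e3 = of_real (-1)" "(-1::real) \<noteq> 0"
    using assms(1) by (simp_all add: SL2_def det_e3)
  obtain x y where xy: "S ** e3 ** cadj S = sym2 x y" "y \<noteq> 0" "h1 = x / y" "h2 = x / y"
    using assms(2,3) closes_iff_ratios[OF S e3_cadj E] unfolding SU11_isom by blast
  have "x\<^sup>2 - y\<^sup>2 = -1" using det_sym2_congruence[OF S xy(1) E(1)] .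
  then show ?thesis using xy abs_ratio_vs_one(2)[of y x] by simp
qed

lemma sym2_frame_closes_iff:
  assumes "a\<^sup>2 - b\<^sup>2 = 1"
  shows "(conjm (sym2 a b) P1 \<in> SU2 \<and> conjm (sym2 a b) P2 \<in> SU2) \<longleftrightarrow>
    (2 * a * b \<noteq> 0 \<and> h1 = (a\<^sup>2 + b\<^sup>2) / (2 * a * b) \<and> h2 = (a\<^sup>2 + b\<^sup>2) / (2 * a * b))"
proof -
  have S: "det (sym2 a b) = 1" using frames_in_SL2(1)[OF assms] by (simp add: SL2_def)
  have E: "det (mat 1 :: complex^2^2) = of_real 1" "(1::real) \<noteq> 0" by simp_all
  show ?thesis
    unfolding SU2_isom closes_iff_ratios[OF S cadj_one E] sym2_frame(2) sym2_eq_iff by auto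
qed

lemma lorentz_frame_closes_iff:
  assumes "- 2 * a * b = 1"
  shows "(conjm (lorentz_frame a b) P1 \<in> SU11 \<and> conjm (lorentz_frame a b) P2 \<in> SU11) \<longleftrightarrow>
    (a\<^sup>2 + b\<^sup>2 \<noteq> 0 \<and> h1 = (a\<^sup>2 - b\<^sup>2) / (a\<^sup>2 + b\<^sup>2) \<and> h2 = (a\<^sup>2 - b\<^sup>2) / (a\<^sup>2 + b\<^sup>2))"
proof -
  have S: "det (lorentz_frame a b) = 1" using frames_in_SL2(2)[OF assms] by (simp add: SL2_def)
  have E: "det e3 = of_real (-1)" "(-1::real) \<noteq> 0" by (simp_all add: det_e3)
  show ?thesis
    unfolding SU11_isom closes_iff_ratios[OF S e3_cadj E] lorentz_frame(2) sym2_eq_iff by auto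
qed

lemma SU2_frame_closing_iff:
  "(\<exists>\<alpha> \<beta>. \<alpha>\<^sup>2 - \<beta>\<^sup>2 = 1 \<and> conjm (sym2 \<alpha> \<beta>) P1 \<in> SU2 \<and> conjm (sym2 \<alpha> \<beta>) P2 \<in> SU2)
     \<longleftrightarrow> (h1 = h2 \<and> \<bar>h1\<bar> > 1)"
proof
  assume "\<exists>\<alpha> \<beta>. \<alpha>\<^sup>2 - \<beta>\<^sup>2 = 1 \<and> conjm (sym2 \<alpha> \<beta>) P1 \<in> SU2 \<and> conjm (sym2 \<alpha> \<beta>) P2 \<in> SU2"
  then show "h1 = h2 \<and> \<bar>h1\<bar> > 1"
    using SU2_closing_forces frames_in_SL2(1) by blast
next
  assume h: "h1 = h2 \<and> \<bar>h1\<bar> > 1"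
  then obtain a b where "a\<^sup>2 - b\<^sup>2 = 1" "a * b \<noteq> 0" "(a\<^sup>2 + b\<^sup>2) / (2 * a * b) = h1"
    using boost_parameters by blast
  then show "\<exists>\<alpha> \<beta>. \<alpha>\<^sup>2 - \<beta>\<^sup>2 = 1 \<and> conjm (sym2 \<alpha> \<beta>) P1 \<in> SU2 \<and> conjm (sym2 \<alpha> \<beta>) P2 \<in> SU2"
    using sym2_frame_closes_iff h by auto
qed

lemma SU2_frame_ratio:
  assumes "\<alpha>\<^sup>2 - \<beta>\<^sup>2 = 1" "conjm (sym2 \<alpha> \<beta>) P1 \<in> SU2" "conjm (sym2 \<alpha> \<beta>) P2 \<in> SU2"
  shows "(\<alpha>\<^sup>2 + \<beta>\<^sup>2) / (2 * \<alpha> * \<beta>) = h1"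
  using sym2_frame_closes_iff[OF assms(1)] assms(2,3) by simp

lemma SU2_closing_iff:
  "(\<exists>S \<in> SL2. conjm S P1 \<in> SU2 \<and> conjm S P2 \<in> SU2) \<longleftrightarrow> (h1 = h2 \<and> \<bar>h1\<bar> > 1)"
  using SU2_closing_forces SU2_frame_closing_iff frames_in_SL2(1) by blast

lemma SU11_frame_closing_iff:
  "(\<exists>\<alpha> \<beta>. - 2 * \<alpha> * \<beta> = 1 \<and> conjm (lorentz_frame \<alpha> \<beta>) P1 \<in> SU11 \<and>
       conjm (lorentz_frame \<alpha> \<beta>) P2 \<in> SU11)
     \<longleftrightarrow> (h1 = h2 \<and> \<bar>h1\<bar> < 1)"
proof
  assume "\<exists>\<alpha> \<beta>. - 2 * \<alpha> * \<beta> = 1 \<and> conjm (lorentz_frame \<alpha> \<beta>) P1 \<in> SU11 \<and>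
       conjm (lorentz_frame \<alpha> \<beta>) P2 \<in> SU11"
  then show "h1 = h2 \<and> \<bar>h1\<bar> < 1"
    using SU11_closing_forces frames_in_SL2(2) by blast
next
  assume h: "h1 = h2 \<and> \<bar>h1\<bar> < 1"
  then obtain a b where ab: "- 2 * a * b = 1" "(a\<^sup>2 - b\<^sup>2) / (a\<^sup>2 + b\<^sup>2) = h1"
    using lorentz_parameters by blast
  then have "a\<^sup>2 + b\<^sup>2 \<noteq> 0" by auto
  then show "\<exists>\<alpha> \<beta>. - 2 * \<alpha> * \<beta> = 1 \<and> conjm (lorentz_frame \<alpha> \<beta>) P1 \<in> SU11 \<and>
       conjm (lorentz_frame \<alpha> \<beta>) P2 \<in> SU11"
    using lorentz_frame_closes_iff ab h by auto
qed

lemma SU11_frame_ratio: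
  assumes "- 2 * \<alpha> * \<beta> = 1" "conjm (lorentz_frame \<alpha> \<beta>) P1 \<in> SU11"
    "conjm (lorentz_frame \<alpha> \<beta>) P2 \<in> SU11"
  shows "(\<alpha>\<^sup>2 - \<beta>\<^sup>2) / (\<alpha>\<^sup>2 + \<beta>\<^sup>2) = h1"
  using lorentz_frame_closes_iff[OF assms(1)] assms(2,3) by simp

lemma SU11_closing_iff:
  "(\<exists>S \<in> SL2. conjm S P1 \<in> SU11 \<and> conjm S P2 \<in> SU11) \<longleftrightarrow> (h1 = h2 \<and> \<bar>h1\<bar> < 1)"
  using SU11_closing_forces SU11_frame_closing_iff frames_in_SL2(2) by blast

end

theorem mainTheorem3:
  fixes k :: nat and A1 B1 C1 D1 A2 B2 C2 D2 :: complex
  assumes "k \<ge> 1"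
    and "A1 * D1 - B1 * C1 = 1"
    and "A2 * D2 - B2 * C2 = 1"
  shows
    "(\<exists>(p::complex) (q::complex) (r1::real) (r2::real) (r3::real) (r4::real).
        Phi1 k A1 B1 C1 D1 = mat2 (of_real r1) p (- cnj p) (of_real r2) \<and>
        Phi2 A2 B2 C2 D2 = mat2 q (\<i> * of_real r3) (\<i> * of_real r4) (cnj q))
     \<and>
     (\<forall>(p::complex) (q::complex) (r1::real) (r2::real) (r3::real) (r4::real).
        Phi1 k A1 B1 C1 D1 = mat2 (of_real r1) p (- cnj p) (of_real r2) \<and>
        Phi2 A2 B2 C2 D2 = mat2 q (\<i> * of_real r3) (\<i> * of_real r4) (cnj q) \<and>
        p \<noteq> 0 \<and> q \<noteq> 0 \<and> r1 \<noteq> r2 \<and> r3 \<noteq> r4 \<longrightarrow>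
        (let h1 = 2 * Re p / (r2 - r1); h2 = 2 * Im q / (r4 - r3);
             P1 = Phi1 k A1 B1 C1 D1; P2 = Phi2 A2 B2 C2 D2 in
          ((\<exists>\<alpha> \<beta> :: real. \<alpha>\<^sup>2 - \<beta>\<^sup>2 = 1 \<and>
              conjm (mat2 (of_real \<alpha>) (of_real \<beta>) (of_real \<beta>) (of_real \<alpha>)) P1 \<in> SU2 \<and>
              conjm (mat2 (of_real \<alpha>) (of_real \<beta>) (of_real \<beta>) (of_real \<alpha>)) P2 \<in> SU2)
            \<longleftrightarrow> (h1 = h2 \<and> \<bar>h1\<bar> > 1))
          \<and>
          (\<forall>\<alpha> \<beta> :: real. \<alpha>\<^sup>2 - \<beta>\<^sup>2 = 1 \<and>
              conjm (mat2 (of_real \<alpha>) (of_real \<beta>) (of_real \<beta>) (of_real \<alpha>)) P1 \<in> SU2 \<and>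
              conjm (mat2 (of_real \<alpha>) (of_real \<beta>) (of_real \<beta>) (of_real \<alpha>)) P2 \<in> SU2
            \<longrightarrow> (\<alpha>\<^sup>2 + \<beta>\<^sup>2) / (2 * \<alpha> * \<beta>) = h1)
          \<and>
          ((\<exists>\<alpha> \<beta> :: real. - 2 * \<alpha> * \<beta> = 1 \<and>
              conjm (mat2 (of_real \<alpha>) (of_real \<beta>) (of_real \<alpha>) (- of_real \<beta>)) P1 \<in> SU11 \<and>
              conjm (mat2 (of_real \<alpha>) (of_real \<beta>) (of_real \<alpha>) (- of_real \<beta>)) P2 \<in> SU11)
            \<longleftrightarrow> (h1 = h2 \<and> \<bar>h1\<bar> < 1))
          \<and>
          (\<forall>\<alpha> \<beta> :: real. - 2 * \<alpha> * \<beta> = 1 \<and>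
              conjm (mat2 (of_real \<alpha>) (of_real \<beta>) (of_real \<alpha>) (- of_real \<beta>)) P1 \<in> SU11 \<and>
              conjm (mat2 (of_real \<alpha>) (of_real \<beta>) (of_real \<alpha>) (- of_real \<beta>)) P2 \<in> SU11
            \<longrightarrow> (\<alpha>\<^sup>2 - \<beta>\<^sup>2) / (\<alpha>\<^sup>2 + \<beta>\<^sup>2) = h1)
          \<and>
          ((\<exists>S \<in> SL2. conjm S P1 \<in> SU2 \<and> conjm S P2 \<in> SU2) \<longleftrightarrow> (h1 = h2 \<and> \<bar>h1\<bar> > 1))
          \<and>
          ((\<exists>S \<in> SL2. conjm S P1 \<in> SU11 \<and> conjm S P2 \<in> SU11) \<longleftrightarrow> (h1 = h2 \<and> \<bar>h1\<bar> < 1))))"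
proof -
  have det1: "det (Phi1 k A1 B1 C1 D1) = 1" using det_Phi1 assms(2) .
  have det2: "det (Phi2 A2 B2 C2 D2) = 1" using det_Phi2 assms(3) .
  show ?thesis
  proof (intro conjI allI impI, goal_cases)
    case 1
    show ?case using Phi1_shape[of k A1 B1 C1 D1] Phi2_shape[of A2 B2 C2 D2] by blast
  next
    case (2 p q r1 r2 r3 r4)
    interpret monodromy_data "Phi1 k A1 B1 C1 D1" "Phi2 A2 B2 C2 D2" p q r1 r2 r3 r4
        "2 * Re p / (r2 - r1)" "2 * Im q / (r4 - r3)"
      using 2 det1 det2 by unfold_locales auto
    show ?case
      unfolding Let_def
      using SU2_frame_closing_iff SU2_frame_ratio SU2_closing_iff
        SU11_frame_closing_iff SU11_frame_ratio SU11_closing_iff by blast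
  qed
qed

end
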